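(* Let $A\subseteq B$ be a ring extension (commutative rings with identity). Then the following conditions are equivalent: (i) the extension $A\subseteq B$ has the finite character, i.e. every $B$-regular ideal of $A$ is contained in only finitely many maximal ideals of $A$; (ii) for any finitely generated $B$-regular ideal $\mathfrak a$ of $A$, every collection of pairwise comaximal, finitely generated, $B$-regular ideals of $A$ containing $\mathfrak a$ is finite.
   Context: An $A$-submodule $S$ of $B$ is called $B$-regular if $SB=B$. Two ideals $\mathfrak b_1,\mathfrak b_2$ of $A$ are comaximal if $\mathfrak b_1+\mathfrak b_2=A$ (equivalently, here, among proper $B$-regular ideals: no proper $B$-regular ideal contains both); a collection is pairwise comaximal if any two distinct members are comaximal. *)

theory Defs
  imports "HOL-Algebra.Algebra"
begin

text \<open>Ring extension A \<subseteq> B: B is a commutative ring R, A is a subring (carrier A) of R.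
  The ring A is the structure R with carrier restricted to A.\<close>

definition B_regular :: "('a, 'b) ring_scheme \<Rightarrow> 'a set \<Rightarrow> bool" where
  "B_regular R S \<longleftrightarrow> genideal R S = carrier R"

definition fin_gen_ideal :: "('a, 'b) ring_scheme \<Rightarrow> 'a set \<Rightarrow> bool" where
  "fin_gen_ideal R I \<longleftrightarrow> (\<exists>F. finite F \<and> F \<subseteq> carrier R \<and> I = genideal R F)"

definition comaximal :: "('a, 'b) ring_scheme \<Rightarrow> 'a set \<Rightarrow> 'a set \<Rightarrow> bool" where
  "comaximal R I J \<longleftrightarrow> I <+>\<^bsub>R\<^esub> J = carrier R"

definition finite_character :: "('a, 'b) ring_scheme \<Rightarrow> 'a set \<Rightarrow> bool" where
  "finite_character R A \<longleftrightarrow>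
     (\<forall>I. ideal I (R\<lparr>carrier := A\<rparr>) \<and> B_regular R I \<longrightarrow>
        finite {M. maximalideal M (R\<lparr>carrier := A\<rparr>) \<and> I \<subseteq> M})"

end

(*
  Proper comaximal ideals lie in distinct maximal ideals, so a pairwise comaximal family of ideals
  containing \<aa> is no larger than the set of maximal ideals containing \<aa>: (i) implies (ii).
  Conversely, 1 is a finite combination of elements of a B-regular ideal, so it contains a finitely
  generated B-regular ideal \<aa>. If \<aa> lay in infinitely many maximal ideals, an infinite
  pairwise comaximal family of finitely generated ideals over \<aa> could be built one member at a
  time: in an infinite set of maximal ideals some M contains an element x outside infinitely many
  of them; the next member is generated by \<aa>, x and, for each earlier member I, an element of M
  that completes an element of I to 1.
*)

theory Submission
  imports Defs
begin

lemma (in ring) directed_Union_is_ideal: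
  assumes "\<I> \<noteq> {}" and ideals: "\<And>I. I \<in> \<I> \<Longrightarrow> ideal I R"
    and directed: "\<And>I J. I \<in> \<I> \<Longrightarrow> J \<in> \<I> \<Longrightarrow> \<exists>K\<in>\<I>. I \<subseteq> K \<and> J \<subseteq> K"
  shows "ideal (\<Union>\<I>) R"
proof (rule idealI[OF ring_axioms])
  show "subgroup (\<Union>\<I>) (add_monoid R)"
  proof
    show "\<Union>\<I> \<subseteq> carrier (add_monoid R)"
      using ideals ideal.Icarr by fastforce
    obtain I where "I \<in> \<I>" using \<open>\<I> \<noteq> {}\<close> by blast
    then show "\<one>\<^bsub>add_monoid R\<^esub> \<in> \<Union>\<I>"
      using additive_subgroup.zero_closed[OF ideal.axioms(1)[OF ideals]] by auto
  next
    fix x y assume "x \<in> \<Union>\<I>" "y \<in> \<Union>\<I>"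
    then obtain K where K: "K \<in> \<I>" "x \<in> K" "y \<in> K"
      using directed by (metis UnionE subsetD)
    then show "x \<otimes>\<^bsub>add_monoid R\<^esub> y \<in> \<Union>\<I>"
      using additive_subgroup.a_closed[OF ideal.axioms(1)[OF ideals[OF K(1)]]] by auto
    show "inv\<^bsub>add_monoid R\<^esub> x \<in> \<Union>\<I>"
      using K additive_subgroup.a_inv_closed[OF ideal.axioms(1)[OF ideals[OF K(1)]]]
      unfolding a_inv_def by blast
  qed
next
  fix a x assume "a \<in> \<Union>\<I>" "x \<in> carrier R"
  then obtain I where "I \<in> \<I>" "a \<in> I" by blast
  then show "x \<otimes> a \<in> \<Union>\<I>" and "a \<otimes> x \<in> \<Union>\<I>"
    using ideal.I_l_closed[OF ideals] ideal.I_r_closed[OF ideals] \<open>x \<in> carrier R\<close> by blast+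
qed

lemma (in ring) genideal_finite_subset:
  assumes "S \<subseteq> carrier R" "x \<in> Idl S"
  shows "\<exists>F. finite F \<and> F \<subseteq> S \<and> x \<in> Idl F"
proof -
  let ?\<I> = "{Idl F | F. finite F \<and> F \<subseteq> S}"
  have "ideal (\<Union>?\<I>) R"
  proof (rule directed_Union_is_ideal)
    show "?\<I> \<noteq> {}" by blast
    show "\<And>I. I \<in> ?\<I> \<Longrightarrow> ideal I R"
      using assms(1) genideal_ideal by blast
    fix I J assume "I \<in> ?\<I>" "J \<in> ?\<I>"
    then obtain F G where F: "finite F" "F \<subseteq> S" "I = Idl F"
      and G: "finite G" "G \<subseteq> S" "J = Idl G"
      by blast
    have "F \<union> G \<subseteq> carrier R" using F G assms(1) by blast
    then have "I \<subseteq> Idl (F \<union> G)" "J \<subseteq> Idl (F \<union> G)"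
      using F(3) G(3) subset_Idl_subset by blast+
    moreover have "Idl (F \<union> G) \<in> ?\<I>" using F G by blast
    ultimately show "\<exists>K\<in>?\<I>. I \<subseteq> K \<and> J \<subseteq> K" by blast
  qed
  moreover have "S \<subseteq> \<Union>?\<I>"
    using assms(1) genideal_self' by blast
  ultimately have "Idl S \<subseteq> \<Union>?\<I>"
    by (rule genideal_minimal)
  then show ?thesis using assms(2) by blast
qed

lemma (in ring) fin_gen_ideal_imp_ideal: "fin_gen_ideal R I \<Longrightarrow> ideal I R"
  unfolding fin_gen_ideal_def using genideal_ideal by blast

lemma (in ring) ideal_subset_maximalideal:
  assumes "ideal I R" "I \<noteq> carrier R"
  shows "\<exists>M. maximalideal M R \<and> I \<subseteq> M"
proof -
  let ?\<A> = "{J. ideal J R \<and> I \<subseteq> J \<and> \<one> \<notin> J}"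
  have "\<one> \<notin> I" using assms ideal.one_imp_carrier by blast
  then have "?\<A> \<noteq> {}" using assms(1) by blast
  then have "\<exists>M\<in>?\<A>. \<forall>J\<in>?\<A>. M \<subseteq> J \<longrightarrow> J = M"
  proof (rule subset_Zorn_nonempty)
    fix \<C> assume "\<C> \<noteq> {}" "subset.chain ?\<A> \<C>"
    then have chain: "subset.chain {J. ideal J R} \<C>" and "\<C> \<subseteq> ?\<A>"
      unfolding pred_on.chain_def by auto
    moreover have "ideal (\<Union>\<C>) R"
      using chain_Union_is_ideal[OF chain] \<open>\<C> \<noteq> {}\<close> by simp
    ultimately show "\<Union>\<C> \<in> ?\<A>"
      using \<open>\<C> \<noteq> {}\<close> by auto
  qed
  then obtain M where M: "M \<in> ?\<A>" and M_max: "\<forall>J\<in>?\<A>. M \<subseteq> J \<longrightarrow> J = M"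
    by (rule bexE)
  have "maximalideal M R"
  proof (rule maximalidealI)
    show "ideal M R" using M by simp
    show "carrier R \<noteq> M" using M one_closed by auto
    fix J assume J: "ideal J R" "M \<subseteq> J"
    show "J = M \<or> J = carrier R"
    proof (cases "\<one> \<in> J")
      case True
      then show ?thesis using ideal.one_imp_carrier[OF J(1)] by blast
    next
      case False
      then show ?thesis using M_max M J by blast
    qed
  qed
  then show ?thesis using M by blast
qed

lemma (in ring) comaximal_of_sum_one:
  assumes "ideal I R" "ideal J R" "u \<in> I" "v \<in> J" "u \<oplus> v = \<one>"
  shows "comaximal R I J"
proof -
  have "\<one> \<in> I <+>\<^bsub>R\<^esub> J" using assms(3-5) unfolding set_add_def' by force
  then show ?thesis
    unfolding comaximal_def by (rule ideal.one_imp_carrier[OF add_ideals[OF assms(1,2)]])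
qed

lemma (in ring) comaximal_sym:
  assumes "ideal I R" "ideal J R"
  shows "comaximal R I J \<longleftrightarrow> comaximal R J I"
proof -
  have "I \<subseteq> carrier R" "J \<subseteq> carrier R"
    using ideal.Icarr[OF assms(1)] ideal.Icarr[OF assms(2)] by blast+
  then have "I <+>\<^bsub>R\<^esub> J = J <+>\<^bsub>R\<^esub> I"
    by (rule set_add_comm)
  then show ?thesis
    unfolding comaximal_def by (rule arg_cong)
qed

lemma (in ring) maximalideal_not_subset_sum_one:
  assumes "maximalideal M R" "ideal J R" "\<not> J \<subseteq> M"
  shows "\<exists>j\<in>J. \<exists>m\<in>M. j \<oplus> m = \<one>"
proof -
  interpret M: maximalideal M R by fact
  have sum_ideal: "ideal (J <+>\<^bsub>R\<^esub> M) R"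
    using add_ideals[OF assms(2) M.is_ideal] .
  have "J \<union> M \<subseteq> carrier R"
    using ideal.Icarr[OF assms(2)] M.Icarr by blast
  from genideal_self[OF this] have sub: "J \<union> M \<subseteq> J <+>\<^bsub>R\<^esub> M"
    unfolding union_genideal[OF assms(2) M.is_ideal] .
  then have "J <+>\<^bsub>R\<^esub> M \<noteq> M"
    using assms(3) by blast
  moreover have "J <+>\<^bsub>R\<^esub> M = M \<or> J <+>\<^bsub>R\<^esub> M = carrier R"
    using M.I_maximal[OF sum_ideal] sub ideal.Icarr[OF sum_ideal] by blast
  ultimately have "\<one> \<in> J <+>\<^bsub>R\<^esub> M"
    by simp
  then show ?thesis
    unfolding set_add_def' by fastforce
qed

lemma (in ring) maximalideal_subset_eq:
  assumes "maximalideal M R" "maximalideal N R" "M \<subseteq> N"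
  shows "M = N"
  using maximalideal.I_maximal[OF assms(1) maximalideal.axioms(1)[OF assms(2)] assms(3)]
    ideal.Icarr[OF maximalideal.axioms(1)[OF assms(2)]] maximalideal.I_notcarr[OF assms(2)]
  by blast

lemma (in ring) pairwise_comaximal_finite:
  assumes fin: "finite {M. maximalideal M R \<and> \<aa> \<subseteq> M}"
    and ideals: "\<And>I. I \<in> \<C> \<Longrightarrow> ideal I R \<and> \<aa> \<subseteq> I"
    and comax: "pairwise (comaximal R) \<C>"
  shows "finite \<C>"
proof -
  have "\<exists>M. maximalideal M R \<and> I \<subseteq> M" if "I \<in> \<C> - {carrier R}" for I
    using ideal_subset_maximalideal ideals that by blast
  then obtain M_of where M_of: "\<And>I. I \<in> \<C> - {carrier R} \<Longrightarrow> maximalideal (M_of I) R \<and> I \<subseteq> M_of I"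
    by metis
  have "inj_on M_of (\<C> - {carrier R})"
  proof (rule inj_onI, rule ccontr)
    fix I J assume IJ: "I \<in> \<C> - {carrier R}" "J \<in> \<C> - {carrier R}" "M_of I = M_of J" "I \<noteq> J"
    interpret M: maximalideal "M_of I" R using M_of IJ(1) by blast
    have "I \<subseteq> M_of I" "J \<subseteq> M_of I"
      using M_of IJ by auto
    then have "I <+>\<^bsub>R\<^esub> J \<subseteq> M_of I"
      unfolding set_add_def' using M.a_closed by blast
    moreover have "I <+>\<^bsub>R\<^esub> J = carrier R"
      using comax IJ unfolding pairwise_def comaximal_def by blast
    ultimately show False using M.I_notcarr M.Icarr by blast
  qed
  moreover have "M_of ` (\<C> - {carrier R}) \<subseteq> {M. maximalideal M R \<and> \<aa> \<subseteq> M}"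
    using M_of ideals by blast
  ultimately have "finite (\<C> - {carrier R})"
    using inj_on_finite fin by blast
  then show ?thesis by simp
qed

lemma (in ring) infinite_maximalideals_split:
  assumes "infinite \<M>" and max: "\<And>M. M \<in> \<M> \<Longrightarrow> maximalideal M R"
  shows "\<exists>M\<in>\<M>. \<exists>x\<in>M. infinite {N\<in>\<M>. x \<notin> N}"
proof (rule ccontr)
  assume "\<not> ?thesis"
  then have cofinite: "\<And>M x. M \<in> \<M> \<Longrightarrow> x \<in> M \<Longrightarrow> finite {N\<in>\<M>. x \<notin> N}"
    by blast
  obtain M where M: "M \<in> \<M>" using infinite_imp_nonempty[OF assms(1)] by blast
  obtain N where N: "N \<in> \<M>" "N \<noteq> M"
    using infinite_imp_nonempty[OF infinite_remove[OF assms(1)]] by blast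
  have "\<not> N \<subseteq> M" using maximalideal_subset_eq[OF max[OF N(1)] max[OF M]] N(2) by blast
  then obtain j m where jm: "j \<in> N" "m \<in> M" "j \<oplus> m = \<one>"
    using maximalideal_not_subset_sum_one[OF max[OF M] maximalideal.axioms(1)[OF max[OF N(1)]]]
    by blast
  have "finite ({K\<in>\<M>. j \<notin> K} \<union> {K\<in>\<M>. m \<notin> K})"
    using cofinite[OF N(1) jm(1)] cofinite[OF M jm(2)] by blast
  from infinite_imp_nonempty[OF Diff_infinite_finite[OF this assms(1)]]
  obtain K where K: "K \<in> \<M>" "j \<in> K" "m \<in> K"
    by blast
  interpret K: maximalideal K R using max[OF K(1)] .
  have "\<one> \<in> K" using K.a_closed[OF K(2,3)] jm(3) by simp
  then show False using K.one_imp_carrier K.I_notcarr by simp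
qed

text \<open>A stage of the construction of an infinite comaximal family: the next member will be
  built inside one of the maximal ideals of the infinite reservoir \<open>\<M>\<close>.\<close>

definition avoiding_family :: "('a, 'b) ring_scheme \<Rightarrow> 'a set \<Rightarrow> 'a set set \<Rightarrow> 'a set set \<Rightarrow> bool"
  where "avoiding_family R \<aa> \<C> \<M> \<longleftrightarrow>
    finite \<C> \<and> pairwise (comaximal R) \<C> \<and> (\<forall>I\<in>\<C>. fin_gen_ideal R I \<and> \<aa> \<subseteq> I) \<and>
    infinite \<M> \<and> (\<forall>M\<in>\<M>. maximalideal M R \<and> \<aa> \<subseteq> M) \<and> (\<forall>I\<in>\<C>. \<forall>M\<in>\<M>. \<not> I \<subseteq> M)"

lemma (in ring) avoiding_family_extend:
  assumes "fin_gen_ideal R \<aa>" and "avoiding_family R \<aa> \<C> \<M>"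
  shows "\<exists>J \<M>'. J \<notin> \<C> \<and> avoiding_family R \<aa> (insert J \<C>) \<M>'"
proof -
  obtain F where F: "finite F" "F \<subseteq> carrier R" "\<aa> = Idl F"
    using assms(1) unfolding fin_gen_ideal_def by blast
  from assms(2) have fin: "finite \<C>" and comax: "pairwise (comaximal R) \<C>"
    and fg: "\<And>I. I \<in> \<C> \<Longrightarrow> fin_gen_ideal R I \<and> \<aa> \<subseteq> I" and "infinite \<M>"
    and max: "\<And>M. M \<in> \<M> \<Longrightarrow> maximalideal M R \<and> \<aa> \<subseteq> M"
    and avoid: "\<And>I M. I \<in> \<C> \<Longrightarrow> M \<in> \<M> \<Longrightarrow> \<not> I \<subseteq> M"
    unfolding avoiding_family_def by auto
  obtain M x where M: "M \<in> \<M>" "x \<in> M" and inf: "infinite {N\<in>\<M>. x \<notin> N}"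
    using infinite_maximalideals_split[OF \<open>infinite \<M>\<close>] max by blast
  interpret M: maximalideal M R using max M(1) by blast
  have "\<exists>m\<in>M. \<exists>u\<in>I. u \<oplus> m = \<one>" if "I \<in> \<C>" for I
  proof -
    have "ideal I R" using fg[OF that] fin_gen_ideal_imp_ideal by blast
    then show ?thesis
      using maximalideal_not_subset_sum_one[OF M.is_maximalideal] avoid[OF that M(1)] by blast
  qed
  then obtain m where m: "\<And>I. I \<in> \<C> \<Longrightarrow> m I \<in> M" "\<And>I. I \<in> \<C> \<Longrightarrow> \<exists>u\<in>I. u \<oplus> m I = \<one>"
    by metis
  \<comment> \<open>\<open>x\<close> keeps \<open>J\<close> out of the surviving maximal ideals, the \<open>m I\<close> make it comaximal to each \<open>I\<close>.\<close>
  define G where "G = F \<union> insert x (m ` \<C>)"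
  define J where "J = Idl G"
  have "F \<subseteq> M" using F(2,3) genideal_self max[OF M(1)] by blast
  then have "G \<subseteq> M" using m(1) M(2) unfolding G_def by blast
  then have G_carr: "G \<subseteq> carrier R" using M.Icarr by blast
  have "J \<subseteq> M" unfolding J_def using genideal_minimal[OF M.is_ideal \<open>G \<subseteq> M\<close>] .
  have G_J: "G \<subseteq> J" unfolding J_def using genideal_self[OF G_carr] .
  have "finite G" unfolding G_def using F(1) fin by simp
  then have J_fin_gen: "fin_gen_ideal R J"
    unfolding fin_gen_ideal_def J_def using G_carr by blast
  have "F \<subseteq> G" unfolding G_def by blast
  then have "\<aa> \<subseteq> J"
    unfolding F(3) J_def by (rule subset_Idl_subset[OF G_carr])
  have "comaximal R I J \<and> comaximal R J I" if "I \<in> \<C>" for I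
  proof -
    have ideals: "ideal I R" "ideal J R"
      using fg[OF that] J_fin_gen fin_gen_ideal_imp_ideal by blast+
    moreover have "m I \<in> J" using G_J that unfolding G_def by blast
    ultimately show ?thesis
      using m(2)[OF that] comaximal_of_sum_one comaximal_sym[OF ideals] by blast
  qed
  moreover have "x \<in> J" using G_J unfolding G_def by blast
  ultimately have "avoiding_family R \<aa> (insert J \<C>) {N\<in>\<M>. x \<notin> N}"
    using fin comax fg max avoid inf J_fin_gen \<open>\<aa> \<subseteq> J\<close>
    unfolding avoiding_family_def pairwise_insert by auto
  moreover have "J \<notin> \<C>" using \<open>J \<subseteq> M\<close> avoid M(1) by blast
  ultimately show ?thesis by blast
qed

lemma (in ring) infinite_comaximal_family:
  assumes "fin_gen_ideal R \<aa>" and "infinite {M. maximalideal M R \<and> \<aa> \<subseteq> M}"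
  shows "\<exists>\<C>. infinite \<C> \<and> pairwise (comaximal R) \<C> \<and> (\<forall>I\<in>\<C>. fin_gen_ideal R I \<and> \<aa> \<subseteq> I)"
proof -
  have "\<exists>C. \<forall>n. ((\<exists>\<M>. avoiding_family R \<aa> (C n) \<M>) \<and> card (C n) = n) \<and> C n \<subseteq> C (Suc n)"
  proof (rule dependent_nat_choice)
    show "\<exists>\<C>. (\<exists>\<M>. avoiding_family R \<aa> \<C> \<M>) \<and> card \<C> = 0"
      using assms(2) unfolding avoiding_family_def by auto
    fix \<C> n assume "(\<exists>\<M>. avoiding_family R \<aa> \<C> \<M>) \<and> card \<C> = n"
    then obtain J \<M>' where "J \<notin> \<C>" "avoiding_family R \<aa> (insert J \<C>) \<M>'" "card \<C> = n"
      using avoiding_family_extend[OF assms(1)] by blast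
    then show "\<exists>\<C>'. ((\<exists>\<M>. avoiding_family R \<aa> \<C>' \<M>) \<and> card \<C>' = Suc n) \<and> \<C> \<subseteq> \<C>'"
      unfolding avoiding_family_def by (intro exI[of _ "insert J \<C>"]) auto
  qed
  then obtain C where family: "\<And>n. \<exists>\<M>. avoiding_family R \<aa> (C n) \<M>"
    and card: "\<And>n. card (C n) = n" and step: "\<And>n. C n \<subseteq> C (Suc n)"
    by blast
  have comax: "pairwise (comaximal R) (C n)" and fin_gen: "\<forall>I\<in>C n. fin_gen_ideal R I \<and> \<aa> \<subseteq> I"
    for n using family[of n] unfolding avoiding_family_def by blast+
  have mono: "C m \<subseteq> C n" if "m \<le> n" for m n
    using lift_Suc_mono_le[of C, OF step that] .
  have "infinite (\<Union>n. C n)"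
  proof
    assume fin: "finite (\<Union>n. C n)"
    have "card (C (Suc (card (\<Union>n. C n)))) \<le> card (\<Union>n. C n)"
      using card_mono[OF fin] by blast
    then show False using card by simp
  qed
  moreover have "pairwise (comaximal R) (\<Union>n. C n)"
  proof (rule pairwiseI)
    fix I J assume "I \<in> (\<Union>n. C n)" "J \<in> (\<Union>n. C n)" "I \<noteq> J"
    then obtain k l where "I \<in> C k" "J \<in> C l" by blast
    then have "I \<in> C (max k l)" "J \<in> C (max k l)"
      using mono[OF max.cobounded1] mono[OF max.cobounded2] by blast+
    then show "comaximal R I J"
      using comax \<open>I \<noteq> J\<close> unfolding pairwise_def by blast
  qed
  moreover have "\<forall>I\<in>(\<Union>n. C n). fin_gen_ideal R I \<and> \<aa> \<subseteq> I"
    using fin_gen by blast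
  ultimately show ?thesis by blast
qed

lemma (in ring) B_regular_mono:
  assumes "B_regular R I" "I \<subseteq> J" "J \<subseteq> carrier R"
  shows "B_regular R J"
proof -
  have "Idl I \<subseteq> Idl J" using subset_Idl_subset[OF assms(3,2)] .
  moreover have "Idl J \<subseteq> carrier R" using ideal.Icarr[OF genideal_ideal[OF assms(3)]] by blast
  ultimately show ?thesis using assms(1) unfolding B_regular_def by blast
qed

lemma (in ring) B_regular_finite_subset:
  assumes "S \<subseteq> carrier R" "B_regular R S"
  shows "\<exists>F. finite F \<and> F \<subseteq> S \<and> B_regular R F"
proof -
  obtain F where F: "finite F" "F \<subseteq> S" "\<one> \<in> Idl F"
    using genideal_finite_subset[OF assms(1)] assms(2) unfolding B_regular_def by blast
  have "F \<subseteq> carrier R" using F(2) assms(1) by blast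
  from ideal.one_imp_carrier[OF genideal_ideal[OF this] F(3)] have "B_regular R F"
    unfolding B_regular_def .
  then show ?thesis using F(1,2) by blast
qed

lemma (in ring) B_regular_ideal_contains_fin_gen:
  assumes "subring A R" "ideal I (R\<lparr>carrier := A\<rparr>)" "B_regular R I"
  shows "\<exists>\<aa>. fin_gen_ideal (R\<lparr>carrier := A\<rparr>) \<aa> \<and> B_regular R \<aa> \<and> \<aa> \<subseteq> I"
proof -
  interpret A: ring "R\<lparr>carrier := A\<rparr>" using subring_is_ring[OF assms(1)] .
  have "I \<subseteq> A" using ideal.Icarr[OF assms(2)] by (simp add: subsetI)
  moreover have "A \<subseteq> carrier R" using subringE(1)[OF assms(1)] .
  ultimately obtain F where F: "finite F" "F \<subseteq> I" "B_regular R F"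
    using B_regular_finite_subset[OF _ assms(3)] by (meson order_trans)
  define \<aa> where "\<aa> = genideal (R\<lparr>carrier := A\<rparr>) F"
  have "F \<subseteq> A" using F(2) \<open>I \<subseteq> A\<close> by blast
  then have "fin_gen_ideal (R\<lparr>carrier := A\<rparr>) \<aa>"
    unfolding fin_gen_ideal_def \<aa>_def using F(1) by auto
  moreover have "\<aa> \<subseteq> I" unfolding \<aa>_def using A.genideal_minimal[OF assms(2) F(2)] .
  moreover have "F \<subseteq> \<aa>" unfolding \<aa>_def using A.genideal_self \<open>F \<subseteq> A\<close> by simp
  moreover have "\<aa> \<subseteq> carrier R" using \<open>\<aa> \<subseteq> I\<close> \<open>I \<subseteq> A\<close> \<open>A \<subseteq> carrier R\<close> by blast
  ultimately show ?thesis using B_regular_mono[OF F(3)] by blast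
qed

lemma (in ring) infinite_B_regular_comaximal_family:
  assumes "subring A R" "fin_gen_ideal (R\<lparr>carrier := A\<rparr>) \<aa>" "B_regular R \<aa>"
    and "infinite {M. maximalideal M (R\<lparr>carrier := A\<rparr>) \<and> \<aa> \<subseteq> M}"
  shows "\<exists>\<C>. infinite \<C> \<and> pairwise (comaximal (R\<lparr>carrier := A\<rparr>)) \<C> \<and>
    (\<forall>J\<in>\<C>. ideal J (R\<lparr>carrier := A\<rparr>) \<and> fin_gen_ideal (R\<lparr>carrier := A\<rparr>) J \<and> B_regular R J \<and> \<aa> \<subseteq> J)"
proof -
  interpret A: ring "R\<lparr>carrier := A\<rparr>" using subring_is_ring[OF assms(1)] .
  obtain \<C> where \<C>: "infinite \<C>" "pairwise (comaximal (R\<lparr>carrier := A\<rparr>)) \<C>"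
    "\<And>J. J \<in> \<C> \<Longrightarrow> fin_gen_ideal (R\<lparr>carrier := A\<rparr>) J \<and> \<aa> \<subseteq> J"
    using A.infinite_comaximal_family[OF assms(2,4)] by blast
  have "ideal J (R\<lparr>carrier := A\<rparr>) \<and> B_regular R J" if "J \<in> \<C>" for J
  proof -
    have "ideal J (R\<lparr>carrier := A\<rparr>)" using \<C>(3)[OF that] A.fin_gen_ideal_imp_ideal by blast
    moreover from this have "J \<subseteq> carrier R"
      using ideal.Icarr subringE(1)[OF assms(1)] by fastforce
    ultimately show ?thesis using B_regular_mono[OF assms(3)] \<C>(3)[OF that] by blast
  qed
  then show ?thesis using \<C> by blast
qed

theorem corollary3p3:
  fixes R :: "('a, 'b) ring_scheme" and A :: "'a set"
  assumes "cring R" and "subring A R"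
  shows "finite_character R A \<longleftrightarrow>
    (\<forall>\<aa>. ideal \<aa> (R\<lparr>carrier := A\<rparr>) \<and> fin_gen_ideal (R\<lparr>carrier := A\<rparr>) \<aa> \<and> B_regular R \<aa> \<longrightarrow>
       (\<forall>\<C>. (\<forall>I\<in>\<C>. ideal I (R\<lparr>carrier := A\<rparr>) \<and> fin_gen_ideal (R\<lparr>carrier := A\<rparr>) I
                     \<and> B_regular R I \<and> \<aa> \<subseteq> I)
            \<and> pairwise (comaximal (R\<lparr>carrier := A\<rparr>)) \<C>
            \<longrightarrow> finite \<C>))"
    (is "_ \<longleftrightarrow> (\<forall>\<aa>. ?fg_reg \<aa> \<longrightarrow> (\<forall>\<C>. ?family \<aa> \<C> \<longrightarrow> finite \<C>))")
proof -
  let ?A = "R\<lparr>carrier := A\<rparr>"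
  interpret R: cring R by fact
  interpret A: ring ?A using R.subring_is_ring[OF assms(2)] .
  show ?thesis
  proof
    assume fin_char: "finite_character R A"
    show "\<forall>\<aa>. ?fg_reg \<aa> \<longrightarrow> (\<forall>\<C>. ?family \<aa> \<C> \<longrightarrow> finite \<C>)"
    proof (intro allI impI)
      fix \<aa> \<C> assume "?fg_reg \<aa>" and family: "?family \<aa> \<C>"
      with fin_char have "finite {M. maximalideal M ?A \<and> \<aa> \<subseteq> M}"
        unfolding finite_character_def by blast
      then show "finite \<C>"
        by (rule A.pairwise_comaximal_finite) (use family in auto)
    qed
  next
    assume families_finite: "\<forall>\<aa>. ?fg_reg \<aa> \<longrightarrow> (\<forall>\<C>. ?family \<aa> \<C> \<longrightarrow> finite \<C>)"
    show "finite_character R A"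
      unfolding finite_character_def
    proof (intro allI impI)
      fix I assume "ideal I ?A \<and> B_regular R I"
      then obtain \<aa> where \<aa>: "fin_gen_ideal ?A \<aa>" "B_regular R \<aa>" "\<aa> \<subseteq> I"
        using R.B_regular_ideal_contains_fin_gen[OF assms(2)] by blast
      have "?fg_reg \<aa>" using \<aa>(1,2) A.fin_gen_ideal_imp_ideal by blast
      then have "finite {M. maximalideal M ?A \<and> \<aa> \<subseteq> M}"
        using families_finite R.infinite_B_regular_comaximal_family[OF assms(2) \<aa>(1,2)] by blast
      then show "finite {M. maximalideal M ?A \<and> I \<subseteq> M}"
        by (rule rev_finite_subset) (use \<aa>(3) in blast)
    qed
  qed
qed

end
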